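(* Let $B$ be a nonzero real vector space, $\lfloor\cdot,\cdot\rfloor$ a symmetric bilinear form on $B$, $q(b):=\tfrac12\lfloor b,b\rfloor$. Let $f\colon B\to\,]{-}\infty,\infty]$ be proper and convex, with $f\ge q$ on $B$ and ${\cal P}_q(f)\ne\emptyset$. Then ${\cal P}_q(f)$ is a $q$--positive subset of $B$.
   Context: ${\cal P}_q(f):=\{b\in B\colon f(b)=q(b)\}$. A subset $A$ is $q$--positive if $A\neq\emptyset$ and $q(b-c)\ge0$ for all $b,c\in A$. *)

theory Defs
  imports "HOL-Analysis.Analysis" "HOL-Library.Extended_Real"
begin

definition qform :: "('a::real_vector \<Rightarrow> 'a \<Rightarrow> real) \<Rightarrow> 'a \<Rightarrow> real" where
  "qform bf b = (1/2) * bf b b"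

definition proper_fun :: "('a \<Rightarrow> ereal) \<Rightarrow> bool" where
  "proper_fun f \<longleftrightarrow> (\<forall>x. f x \<noteq> -\<infinity>) \<and> (\<exists>x. f x \<noteq> \<infinity>)"

definition convex_fun :: "('a::real_vector \<Rightarrow> ereal) \<Rightarrow> bool" where
  "convex_fun f \<longleftrightarrow> (\<forall>x y t. 0 < t \<and> t < 1 \<longrightarrow>
      f ((1 - t) *\<^sub>R x + t *\<^sub>R y) \<le> ereal (1 - t) * f x + ereal t * f y)"

definition Pq :: "('a::real_vector \<Rightarrow> 'a \<Rightarrow> real) \<Rightarrow> ('a \<Rightarrow> ereal) \<Rightarrow> 'a set" where
  "Pq bf f = {b. f b = ereal (qform bf b)}"

definition q_positive :: "('a::real_vector \<Rightarrow> 'a \<Rightarrow> real) \<Rightarrow> 'a set \<Rightarrow> bool" where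
  "q_positive bf A \<longleftrightarrow> A \<noteq> {} \<and> (\<forall>b\<in>A. \<forall>c\<in>A. qform bf (b - c) \<ge> 0)"

end

theory Submission
  imports Defs
begin

text \<open>By the parallelogram law, the midpoint m of b and c satisfies
  (q b + q c)/2 - q m = q(b - c)/4. If b, c \<in> P_q(f), convexity of f and f \<ge> q give
  q m \<le> f m \<le> (f b + f c)/2 = (q b + q c)/2, so q(b - c) \<ge> 0.\<close>

lemma qform_midpoint:
  assumes "bilinear bf" and "\<And>x y. bf x y = bf y x"
  shows "qform bf ((1/2) *\<^sub>R b + (1/2) *\<^sub>R c)
           = (1/2) * qform bf b + (1/2) * qform bf c - (1/4) * qform bf (b - c)"
  using assms
  by (simp add: qform_def bilinear_ladd bilinear_radd bilinear_lmul bilinear_rmul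
      bilinear_lsub bilinear_rsub algebra_simps)

lemma convex_fun_midpoint:
  assumes "convex_fun f"
  shows "f ((1/2) *\<^sub>R x + (1/2) *\<^sub>R y) \<le> ereal (1/2) * f x + ereal (1/2) * f y"
  using assms[unfolded convex_fun_def, rule_format, of "1/2" x y] by simp

lemma qform_diff_nonneg_on_Pq:
  assumes "bilinear bf" and "\<And>x y. bf x y = bf y x"
    and "convex_fun f" and "\<And>b. f b \<ge> ereal (qform bf b)"
    and "b \<in> Pq bf f" and "c \<in> Pq bf f"
  shows "qform bf (b - c) \<ge> 0"
proof -
  let ?m = "(1/2) *\<^sub>R b + (1/2) *\<^sub>R c"
  have "ereal (qform bf ?m) \<le> f ?m"
    using assms(4) .
  also have "\<dots> \<le> ereal (1/2) * f b + ereal (1/2) * f c"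
    using assms(3) by (rule convex_fun_midpoint)
  also have "\<dots> = ereal ((1/2) * qform bf b + (1/2) * qform bf c)"
    using assms(5,6) by (simp add: Pq_def)
  finally have "qform bf ?m \<le> (1/2) * qform bf b + (1/2) * qform bf c"
    by simp
  with qform_midpoint[OF assms(1,2)] show ?thesis
    by simp
qed

theorem lemma3p17:
  fixes bf :: "'a::real_vector \<Rightarrow> 'a \<Rightarrow> real"
    and f :: "'a \<Rightarrow> ereal"
  assumes "(UNIV :: 'a set) \<noteq> {0}"
    and "bilinear bf"
    and "\<And>x y. bf x y = bf y x"
    and "proper_fun f"
    and "convex_fun f"
    and "\<And>b. f b \<ge> ereal (qform bf b)"
    and "Pq bf f \<noteq> {}"
  shows "q_positive bf (Pq bf f)"
  using assms(7) qform_diff_nonneg_on_Pq[OF assms(2,3,5,6)]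
  by (auto simp: q_positive_def)

end
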